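(* Let $n\in\mathbb N$, let $K_1,\dots,K_n$ be singular kernel functions and let $J$ be an arbitrary $n$-field function. Let $\mathbf y\in\overline S$ and let $j\in\{0,1,\dots,n\}$ be such that $m_j(\mathbf y)\ne-\infty$. Then there exist $\delta>0$ and a closed interval $W\subseteq[0,1]$ with the following properties for every $\mathbf x\in\overline S$ with $\|\mathbf x-\mathbf y\|\le\delta$: (i) $W\subseteq I_j(\mathbf x)$, and every point of $W$ has distance at least $\delta$ from the set $\{x_1,\dots,x_n\}$; (ii) $m_j(\mathbf x)=\sup_{t\in W}F(\mathbf x,t)$.
   Context: A kernel function is a function $K:(-1,0)\cup(0,1)\to\mathbb R$ that is concave on $(-1,0)$ and concave on $(0,1)$ and satisfies $\lim_{t\downarrow0}K(t)=\lim_{t\uparrow0}K(t)$. It is extended to $[-1,1]$ with values in $[-\infty,\infty)$ by its one-sided limits at $-1,0,1$. A kernel function is singular if $K(0)=-\infty$. An $n$-field function is a function $J:[0,1]\to[-\infty,\infty)$ that is bounded above and whose set of finite values has total weight strictly greater than $n$. Here the points $0$ and $1$ each have weight $1/2$ and every point of $(0,1)$ has weight $1$. $\overline S=\{\mathbf y\in\mathbb R^n:0\le y_1\le\dots\le y_n\le1\}$. $F(\mathbf y,t)=J(t)+\sum_{i=1}^nK_i(t-y_i)$, with the convention $a+(-\infty)=-\infty$. Set $y_0:=0$ and $y_{n+1}:=1$. For $j=0,\dots,n$ let $I_j(\mathbf y)=[y_j,y_{j+1}]$ and $m_j(\mathbf y)=\sup_{t\in I_j(\mathbf y)}F(\mathbf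 y,t)$. $\|\mathbf v\|=\max_i|v_i|$. *)

theory Defs
  imports "HOL-Analysis.Analysis" "HOL-Library.Extended_Real"
begin

text \<open>A kernel function, already extended to [-1,1] by its one-sided limits,
  with values in the extended reals (only values in [-infinity,infinity) occur).
  It is real-valued and concave on (-1,0) and on (0,1), and its values at -1, 0, 1
  are the corresponding one-sided limits (the two one-sided limits at 0 agree).\<close>
definition kernel_function :: "(real \<Rightarrow> ereal) \<Rightarrow> bool" where
  "kernel_function K \<longleftrightarrow>
     (\<forall>t\<in>{-1<..<0} \<union> {0<..<1}. K t \<noteq> \<infinity> \<and> K t \<noteq> -\<infinity>) \<and>
     concave_on {-1<..<0} (\<lambda>t. real_of_ereal (K t)) \<and>
     concave_on {0<..<1} (\<lambda>t. real_of_ereal (K t)) \<and>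
     (K \<longlongrightarrow> K 0) (at_left 0) \<and>
     (K \<longlongrightarrow> K 0) (at_right 0) \<and>
     (K \<longlongrightarrow> K (-1)) (at_right (-1)) \<and>
     (K \<longlongrightarrow> K 1) (at_left 1)"

definition singular_kernel :: "(real \<Rightarrow> ereal) \<Rightarrow> bool" where
  "singular_kernel K \<longleftrightarrow> kernel_function K \<and> K 0 = -\<infinity>"

definition weight :: "real set \<Rightarrow> ereal" where
  "weight A = (if finite (A \<inter> {0<..<1})
      then ereal (real (card (A \<inter> {0<..<1}))
                  + (if 0 \<in> A then 1/2 else 0) + (if 1 \<in> A then 1/2 else 0))
      else \<infinity>)"

definition n_field_function :: "nat \<Rightarrow> (real \<Rightarrow> ereal) \<Rightarrow> bool" where
  "n_field_function n J \<longleftrightarrow>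
     (\<forall>t\<in>{0..1}. J t \<noteq> \<infinity>) \<and>
     (\<exists>M::real. \<forall>t\<in>{0..1}. J t \<le> ereal M) \<and>
     weight {t\<in>{0..1}. J t \<noteq> -\<infinity>} > ereal (real n)"

text \<open>Vectors y = (y_1,...,y_n) are functions nat => real (indices 1..n);
  yext adds the conventions y_0 = 0, y_(n+1) = 1.\<close>
definition yext :: "nat \<Rightarrow> (nat \<Rightarrow> real) \<Rightarrow> nat \<Rightarrow> real" where
  "yext n y j = (if j = 0 then 0 else if j = Suc n then 1 else y j)"

definition Sbar :: "nat \<Rightarrow> (nat \<Rightarrow> real) set" where
  "Sbar n = {y. \<forall>j\<le>n. yext n y j \<le> yext n y (Suc j)}"

definition Ffun :: "nat \<Rightarrow> (real \<Rightarrow> ereal) \<Rightarrow> (nat \<Rightarrow> real \<Rightarrow> ereal)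
                    \<Rightarrow> (nat \<Rightarrow> real) \<Rightarrow> real \<Rightarrow> ereal" where
  "Ffun n J K y t = J t + (\<Sum>i\<in>{1..n}. K i (t - y i))"

definition Iint :: "nat \<Rightarrow> (nat \<Rightarrow> real) \<Rightarrow> nat \<Rightarrow> real set" where
  "Iint n y j = {yext n y j .. yext n y (Suc j)}"

definition mval :: "nat \<Rightarrow> (real \<Rightarrow> ereal) \<Rightarrow> (nat \<Rightarrow> real \<Rightarrow> ereal)
                    \<Rightarrow> (nat \<Rightarrow> real) \<Rightarrow> nat \<Rightarrow> ereal" where
  "mval n J K y j = (SUP t\<in>Iint n y j. Ffun n J K y t)"

end

theory Submission
  imports Defs
begin

text \<open>Pick \<open>t\<^sub>0 \<in> I\<^sub>j(y)\<close> with \<open>F(y,t\<^sub>0)\<close> finite. Then \<open>J(t\<^sub>0)\<close> and all \<open>K\<^sub>i(t\<^sub>0 - y\<^sub>i)\<close> are finite,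
  so \<open>t\<^sub>0\<close> is not a pole, and by continuity of the kernels \<open>F(x,t\<^sub>0)\<close> stays above some level \<open>L\<close>
  for all \<open>x\<close> near \<open>y\<close>. As the kernels are bounded above and singular at \<open>0\<close>, \<open>F(x,t) < L\<close>
  whenever \<open>t\<close> is close to one of the poles \<open>x\<^sub>k\<close>. So the supremum over \<open>I\<^sub>j(x)\<close> is
  already attained on a fixed window: \<open>I\<^sub>j(y)\<close> minus small neighbourhoods of its poles,
  which for \<open>x\<close> near \<open>y\<close> lies inside \<open>I\<^sub>j(x)\<close> away from all \<open>x\<^sub>i\<close>.\<close>

lemma concave_on_le_secant:
  fixes f :: "real \<Rightarrow> real"
  assumes f: "concave_on S f" and S: "p \<in> S" "q \<in> S" "t \<in> S"
    and pq: "p < q" and t: "t \<notin> {p<..<q}"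
  shows "f t \<le> f p + (f q - f p) / (q - p) * (t - p)"
proof (cases "t \<le> p")
  case True
  show ?thesis
  proof (cases "t = p")
    case False
    with True have tp: "t < p" by simp
    have "closed_segment t q \<subseteq> S"
      using concave_on_imp_convex[OF f] S by (simp add: convex_contains_segment)
    with tp pq have "{t..q} \<subseteq> S" by (simp add: closed_segment_eq_real_ivl)
    with f have "concave_on {t..q} f"
      unfolding concave_on_def by (blast intro: convex_on_subset)
    from concave_onD_Icc''[OF this, of p] tp pq
    have "(f t - f q) / (q - t) * (q - p) + f q \<le> f p" by simp
    with tp pq show ?thesis by (simp add: field_simps)
  qed simp
next
  case False
  with t have qt: "q \<le> t" by auto
  have "closed_segment p t \<subseteq> S"
    using concave_on_imp_convex[OF f] S by (simp add: convex_contains_segment)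
  with pq qt have "{p..t} \<subseteq> S" by (simp add: closed_segment_eq_real_ivl)
  with f have "concave_on {p..t} f"
    unfolding concave_on_def by (blast intro: convex_on_subset)
  from concave_onD_Icc'[OF this, of q] qt pq
  have "(f t - f p) / (t - p) * (q - p) + f p \<le> f q" by simp
  with qt pq show ?thesis by (simp add: field_simps)
qed

lemma concave_on_bounded_above:
  fixes f :: "real \<Rightarrow> real"
  assumes f: "concave_on {a<..<b} f" and ab: "a < b"
  shows "\<exists>R. \<forall>t\<in>{a<..<b}. f t \<le> R"
proof -
  define p1 p2 p3 where "p1 = (3*a + b) / 4" and "p2 = (a + b) / 2" and "p3 = (a + 3*b) / 4"
  have p: "p1 \<in> {a<..<b}" "p2 \<in> {a<..<b}" "p3 \<in> {a<..<b}" "p1 < p2" "p2 < p3"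
    using ab by (auto simp: p1_def p2_def p3_def)
  define s1 s2 where "s1 = (f p2 - f p1) / (p2 - p1)" and "s2 = (f p3 - f p2) / (p3 - p2)"
  have slope: "s * (t - p) \<le> \<bar>s\<bar> * (b - a)" if "t \<in> {a<..<b}" "p \<in> {a<..<b}" for s t p
  proof -
    have "s * (t - p) \<le> \<bar>s\<bar> * \<bar>t - p\<bar>" by (simp add: abs_mult[symmetric])
    also have "\<dots> \<le> \<bar>s\<bar> * (b - a)" using that by (intro mult_left_mono) auto
    finally show ?thesis .
  qed
  have "f t \<le> \<bar>f p1\<bar> + \<bar>f p2\<bar> + \<bar>s1\<bar> * (b - a) + \<bar>s2\<bar> * (b - a)" if t: "t \<in> {a<..<b}" for t
  proof (cases "p2 \<le> t")
    case True
    then have "f t \<le> f p1 + s1 * (t - p1)"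
      unfolding s1_def using concave_on_le_secant[OF f p(1,2) t p(4)] by simp
    with slope[OF t p(1), of s1] ab show ?thesis by (smt (verit) abs_ge_self zero_le_mult_iff)
  next
    case False
    then have "f t \<le> f p2 + s2 * (t - p2)"
      unfolding s2_def using concave_on_le_secant[OF f p(2,3) t p(5)] by simp
    with slope[OF t p(2), of s2] ab show ?thesis by (smt (verit) abs_ge_self zero_le_mult_iff)
  qed
  then show ?thesis by blast
qed

lemma continuous_on_concave_ereal:
  fixes K :: "real \<Rightarrow> ereal"
  assumes fin: "\<forall>t\<in>{a<..<b}. K t \<noteq> \<infinity> \<and> K t \<noteq> -\<infinity>"
    and f: "concave_on {a<..<b} (\<lambda>t. real_of_ereal (K t))"
  shows "continuous_on {a<..<b} K"
proof -
  have "continuous_on {a<..<b} (\<lambda>t. - real_of_ereal (K t))"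
    using f by (intro convex_on_continuous) (auto simp: concave_on_def)
  from continuous_on_ereal[OF continuous_on_minus[OF this]]
  have "continuous_on {a<..<b} (\<lambda>t. ereal (real_of_ereal (K t)))" by simp
  moreover have "ereal (real_of_ereal (K t)) = K t" if "t \<in> {a<..<b}" for t
    using fin that by (cases "K t") auto
  ultimately show ?thesis
    by (subst continuous_on_cong[OF refl, of _ _ "\<lambda>t. ereal (real_of_ereal (K t))"]) auto
qed

lemma kernel_function_continuous_on:
  assumes "kernel_function K"
  shows "continuous_on {-1..1} K"
  unfolding continuous_on_def
proof
  note K = assms[unfolded kernel_function_def]
  fix s :: real assume s: "s \<in> {-1..1}"
  have within: "(K \<longlongrightarrow> K s) (at s within {-1..1})" if "(K \<longlongrightarrow> K s) (at s)"
    using that by (rule tendsto_mono[rotated]) (simp add: at_le)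
  have interior: "(K \<longlongrightarrow> K s) (at s)" if "s \<in> {c<..<d}" "continuous_on {c<..<d} K" for c d
    using that by (simp add: continuous_on_eq_continuous_at isCont_def)
  consider "s = -1" | "s \<in> {-1<..<0}" | "s = 0" | "s \<in> {0<..<1}" | "s = 1"
    using s by force
  then show "(K \<longlongrightarrow> K s) (at s within {-1..1})"
  proof cases
    case 2
    then show ?thesis using K by (intro within interior[of "-1" 0] continuous_on_concave_ereal) auto
  next
    case 3
    then show ?thesis using K by (intro within filterlim_split_at) auto
  next
    case 4
    then show ?thesis using K by (intro within interior[of 0 1] continuous_on_concave_ereal) auto
  qed (use K in \<open>simp_all add: at_within_Icc_at_right at_within_Icc_at_left\<close>)
qed

lemma kernel_function_bounded_above:
  assumes "kernel_function K"
  shows "\<exists>B. \<forall>s\<in>{-1..1}. K s \<le> ereal B"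
proof -
  note K = assms[unfolded kernel_function_def]
  define f where "f t = real_of_ereal (K t)" for t
  obtain R1 R2 where R: "\<forall>t\<in>{-1<..<0}. f t \<le> R1" "\<forall>t\<in>{0<..<1}. f t \<le> R2"
    using concave_on_bounded_above[of "-1" 0 f] concave_on_bounded_above[of 0 1 f] K
    unfolding f_def by auto
  define B where "B = max R1 R2"
  have inner: "K t \<le> ereal B" if "t \<in> {-1<..<0} \<union> {0<..<1}" for t
  proof -
    have "K t = ereal (f t)" using K that unfolding f_def by (cases "K t") auto
    with R that show ?thesis by (auto simp: B_def le_max_iff_disj)
  qed
  have limit: "K c \<le> ereal B"
    if "(K \<longlongrightarrow> K c) F" "F \<noteq> bot" "eventually (\<lambda>t. t \<in> {-1<..<0} \<union> {0<..<1}) F" for c F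
  proof (rule tendsto_upperbound[OF that(1) _ that(2)])
    show "eventually (\<lambda>t. K t \<le> ereal B) F" using that(3) by (rule eventually_mono) (rule inner)
  qed
  have "K (-1) \<le> ereal B"
    by (rule limit) (use K in \<open>auto simp: eventually_at_right_field intro!: exI[of _ 0]\<close>)
  moreover have "K 0 \<le> ereal B"
    by (rule limit) (use K in \<open>auto simp: eventually_at_left_field intro!: exI[of _ "-1"]\<close>)
  moreover have "K 1 \<le> ereal B"
    by (rule limit) (use K in \<open>auto simp: eventually_at_left_field intro!: exI[of _ 0]\<close>)
  ultimately have "\<forall>s\<in>{-1..1}. K s \<le> ereal B"
    using inner by (force simp: less_le)
  then show ?thesis ..
qed

lemma kernels_bounded_above:
  assumes "\<forall>i\<in>I. kernel_function (K i)" "finite I"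
  shows "\<exists>B\<ge>0. \<forall>i\<in>I. \<forall>s\<in>{-1..1}. K i s \<le> ereal B"
proof -
  have "\<forall>i\<in>I. \<exists>b. \<forall>s\<in>{-1..1}. K i s \<le> ereal b"
    using kernel_function_bounded_above assms(1) by blast
  then obtain B where B: "\<forall>i\<in>I. \<forall>s\<in>{-1..1}. K i s \<le> ereal (B i)"
    by (metis bchoice)
  have "K i s \<le> ereal (\<Sum>k\<in>I. \<bar>B k\<bar>)" if "i \<in> I" "s \<in> {-1..1}" for i s
  proof -
    have "B i \<le> (\<Sum>k\<in>I. \<bar>B k\<bar>)"
      using that(1) assms(2) by (meson abs_ge_self abs_ge_zero member_le_sum order_trans)
    with B that show ?thesis by (meson ereal_less_eq(3) order_trans)
  qed
  moreover have "0 \<le> (\<Sum>k\<in>I. \<bar>B k\<bar>)" by (simp add: sum_nonneg)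
  ultimately show ?thesis by blast
qed

lemma continuous_on_eventually_nhds:
  assumes "continuous_on S f" "s \<in> S" "open U" "f s \<in> U"
  shows "eventually (\<lambda>u. u \<in> S \<longrightarrow> f u \<in> U) (nhds s)"
  using assms unfolding continuous_on_topological eventually_nhds by metis

lemma finite_common_radius:
  fixes c :: "'i \<Rightarrow> 'a::metric_space"
  assumes "finite A" "\<forall>i\<in>A. eventually (P i) (nhds (c i))"
  shows "\<exists>d>0. \<forall>i\<in>A. \<forall>u. dist u (c i) < d \<longrightarrow> P i u"
  using assms
proof (induction A rule: finite_induct)
  case empty
  show ?case by (auto intro: exI[of _ 1])
next
  case (insert i A)
  then obtain d1 where d1: "d1 > 0" "\<forall>k\<in>A. \<forall>u. dist u (c k) < d1 \<longrightarrow> P k u" by auto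
  from insert.prems obtain d2 where d2: "d2 > 0" "\<forall>u. dist u (c i) < d2 \<longrightarrow> P i u"
    by (auto simp: eventually_nhds_metric)
  show ?case by (rule exI[of _ "min d1 d2"]) (use d1 d2 in auto)
qed

lemma exists_radius_below_distances:
  fixes y :: "'i \<Rightarrow> real"
  assumes "finite A" "\<forall>i\<in>A. t \<noteq> y i" "0 < r"
  shows "\<exists>\<epsilon>>0. \<epsilon> \<le> r \<and> (\<forall>i\<in>A. \<epsilon> \<le> \<bar>t - y i\<bar>)"
proof -
  define \<epsilon> where "\<epsilon> = Min (insert r ((\<lambda>i. \<bar>t - y i\<bar>) ` A))"
  have "\<epsilon> \<le> r" "\<forall>i\<in>A. \<epsilon> \<le> \<bar>t - y i\<bar>"
    using assms(1) by (auto simp: \<epsilon>_def)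
  moreover have "0 < \<epsilon>" using assms by (simp add: \<epsilon>_def)
  ultimately show ?thesis by blast
qed

lemma SUP_eq_SUP_subset:
  fixes f :: "'a \<Rightarrow> 'b::complete_lattice"
  assumes "W \<subseteq> I" "t0 \<in> W" "\<forall>t\<in>I - W. f t \<le> f t0"
  shows "(SUP t\<in>I. f t) = (SUP t\<in>W. f t)"
proof (rule antisym)
  show "(SUP t\<in>I. f t) \<le> (SUP t\<in>W. f t)"
  proof (rule SUP_least)
    fix t assume "t \<in> I"
    then show "f t \<le> (SUP t\<in>W. f t)"
      using assms(2,3) by (cases "t \<in> W") (auto intro: SUP_upper2)
  qed
qed (use assms(1) in \<open>auto intro: SUP_subset_mono\<close>)

lemma Sbar_yext_mono:
  assumes "x \<in> Sbar n" "i \<le> k" "k \<le> Suc n"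
  shows "yext n x i \<le> yext n x k"
  using assms(2,3)
proof (induction k)
  case (Suc k)
  then show ?case
    using assms(1) by (cases "i = Suc k") (auto simp: Sbar_def intro: order_trans)
qed simp

lemma Sbar_mono:
  assumes "x \<in> Sbar n" "i \<in> {1..n}" "k \<in> {1..n}" "i \<le> k"
  shows "x i \<le> x k"
  using Sbar_yext_mono[OF assms(1) assms(4)] assms(2,3) by (simp add: yext_def)

lemma Sbar_in_unit:
  assumes "x \<in> Sbar n" "i \<in> {1..n}"
  shows "x i \<in> {0..1}"
  using Sbar_yext_mono[OF assms(1), of 0 i] Sbar_yext_mono[OF assms(1), of i "Suc n"] assms(2)
  by (simp add: yext_def)

lemma Sbar_kernel_argument:
  assumes "x \<in> Sbar n" "i \<in> {1..n}" "t \<in> {0..1}"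
  shows "t - x i \<in> {-1..1}"
  using Sbar_in_unit[OF assms(1,2)] assms(3) by auto

lemma Iint_subset_unit:
  assumes "x \<in> Sbar n" "j \<le> n"
  shows "Iint n x j \<subseteq> {0..1}"
  using Sbar_yext_mono[OF assms(1), of 0 j] Sbar_yext_mono[OF assms(1), of "Suc j" "Suc n"] assms(2)
  by (auto simp: Iint_def yext_def)

text \<open>The interval \<open>I\<^sub>j(y)\<close> with \<open>\<epsilon>\<close> cut off at each end that is a pole \<open>y\<^sub>i\<close> of \<open>F\<close>;
  the ends \<open>y\<^sub>0 = 0\<close> and \<open>y\<^sub>n\<^sub>+\<^sub>1 = 1\<close> are not poles and are kept.\<close>

definition window_lo :: "(nat \<Rightarrow> real) \<Rightarrow> nat \<Rightarrow> real \<Rightarrow> real" where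
  "window_lo y j \<epsilon> = (if j = 0 then 0 else y j + \<epsilon>)"

definition window_hi :: "nat \<Rightarrow> (nat \<Rightarrow> real) \<Rightarrow> nat \<Rightarrow> real \<Rightarrow> real" where
  "window_hi n y j \<epsilon> = (if j = n then 1 else y (Suc j) - \<epsilon>)"

lemma mem_window:
  assumes "t \<in> Iint n y j" "j \<le> n" "\<forall>i\<in>{1..n}. \<epsilon> \<le> \<bar>t - y i\<bar>"
  shows "t \<in> {window_lo y j \<epsilon> .. window_hi n y j \<epsilon>}"
proof -
  have "y j + \<epsilon> \<le> t" if "j \<noteq> 0"
    using assms(1,2) assms(3)[rule_format, of j] that by (auto simp: Iint_def yext_def)
  moreover have "t \<le> y (Suc j) - \<epsilon>" if "j \<noteq> n"
    using assms(1,2) assms(3)[rule_format, of "Suc j"] that by (auto simp: Iint_def yext_def)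
  ultimately show ?thesis
    using assms(1) by (auto simp: window_lo_def window_hi_def Iint_def yext_def)
qed

lemma window_subset_Iint:
  assumes "j \<le> n" "\<forall>i\<in>{1..n}. \<bar>x i - y i\<bar> \<le> \<epsilon>"
  shows "{window_lo y j \<epsilon> .. window_hi n y j \<epsilon>} \<subseteq> Iint n x j"
proof -
  have "x j \<le> y j + \<epsilon>" if "j \<noteq> 0"
    using assms(1) assms(2)[rule_format, of j] that by auto
  moreover have "y (Suc j) - \<epsilon> \<le> x (Suc j)" if "j \<noteq> n"
    using assms(1) assms(2)[rule_format, of "Suc j"] that by auto
  ultimately show ?thesis
    using assms(1) by (auto simp: window_lo_def window_hi_def Iint_def yext_def)
qed

lemma window_far_from_poles:
  assumes "x \<in> Sbar n" "j \<le> n" "\<forall>k\<in>{1..n}. \<bar>x k - y k\<bar> \<le> \<delta>"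
    and "t \<in> {window_lo y j \<epsilon> .. window_hi n y j \<epsilon>}" "i \<in> {1..n}"
  shows "\<epsilon> - \<delta> \<le> \<bar>t - x i\<bar>"
proof (cases "i \<le> j")
  case True
  with assms(2,5) have j: "j \<in> {1..n}" by auto
  have "x i \<le> x j" using Sbar_mono[OF assms(1,5) j True] .
  moreover have "x j \<le> y j + \<delta>" using assms(3) j by force
  moreover have "y j + \<epsilon> \<le> t" using assms(4) j by (simp add: window_lo_def)
  ultimately show ?thesis by linarith
next
  case False
  with assms(2,5) have j: "Suc j \<in> {1..n}" "j \<noteq> n" by auto
  have "x (Suc j) \<le> x i" using Sbar_mono[OF assms(1) j(1) assms(5)] False by simp
  moreover have "y (Suc j) - \<delta> \<le> x (Suc j)" using assms(3) j by force
  moreover have "t \<le> y (Suc j) - \<epsilon>" using assms(4) j by (simp add: window_hi_def)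
  ultimately show ?thesis by linarith
qed

lemma Iint_diff_window_near_pole:
  assumes "j \<le> n" "\<forall>k\<in>{1..n}. \<bar>x k - y k\<bar> \<le> \<delta>"
  shows "\<forall>t\<in>Iint n x j - {window_lo y j \<epsilon> .. window_hi n y j \<epsilon>}.
           \<exists>i\<in>{1..n}. \<bar>t - x i\<bar> < \<epsilon> + \<delta>"
proof
  fix t assume t: "t \<in> Iint n x j - {window_lo y j \<epsilon> .. window_hi n y j \<epsilon>}"
  show "\<exists>i\<in>{1..n}. \<bar>t - x i\<bar> < \<epsilon> + \<delta>"
  proof (cases "t < window_lo y j \<epsilon>")
    case True
    with t assms(1) have j: "j \<in> {1..n}"
      by (auto simp: window_lo_def Iint_def yext_def split: if_splits)
    with True t assms(2) have "\<bar>t - x j\<bar> < \<epsilon> + \<delta>"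
      by (force simp: window_lo_def Iint_def yext_def)
    with j show ?thesis ..
  next
    case False
    with t have lt: "window_hi n y j \<epsilon> < t" by auto
    with t assms(1) have j: "Suc j \<in> {1..n}"
      by (auto simp: window_hi_def Iint_def yext_def split: if_splits)
    with lt t assms(2) have "\<bar>t - x (Suc j)\<bar> < \<epsilon> + \<delta>"
      by (force simp: window_hi_def Iint_def yext_def)
    with j show ?thesis ..
  qed
qed

lemma Ffun_le_J:
  assumes "\<forall>i\<in>{1..n}. K i (t - x i) \<le> ereal B"
  shows "Ffun n J K x t \<le> J t + ereal (real n * B)"
proof -
  have "(\<Sum>i\<in>{1..n}. K i (t - x i)) \<le> (\<Sum>i\<in>{1..n}. ereal B)"
    using assms by (intro sum_mono) auto
  then show ?thesis unfolding Ffun_def by (simp add: add_left_mono)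
qed

lemma Ffun_le_kernel_term:
  assumes "\<forall>i\<in>{1..n}. K i (t - x i) \<le> ereal B" "0 \<le> B" "k \<in> {1..n}" "J t \<le> ereal M"
  shows "Ffun n J K x t \<le> ereal (M + real n * B) + K k (t - x k)"
proof -
  have "(\<Sum>i\<in>{1..n}-{k}. K i (t - x i)) \<le> (\<Sum>i\<in>{1..n}-{k}. ereal B)"
    using assms(1) by (intro sum_mono) auto
  also have "\<dots> \<le> ereal (real n * B)"
    using assms(2,3) by (auto intro!: mult_right_mono)
  finally have rest: "(\<Sum>i\<in>{1..n}-{k}. K i (t - x i)) \<le> ereal (real n * B)" .
  have "Ffun n J K x t = J t + (K k (t - x k) + (\<Sum>i\<in>{1..n}-{k}. K i (t - x i)))"
    using assms(3) by (simp add: Ffun_def sum.remove)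
  also have "\<dots> \<le> ereal M + (K k (t - x k) + ereal (real n * B))"
    using assms(4) rest by (intro add_mono) auto
  also have "\<dots> = (ereal M + ereal (real n * B)) + K k (t - x k)"
    by (simp only: ac_simps)
  also have "\<dots> = ereal (M + real n * B) + K k (t - x k)"
    by simp
  finally show ?thesis .
qed

lemma Ffun_ge:
  assumes "ereal a \<le> J t" "\<forall>i\<in>{1..n}. ereal (l i) \<le> K i (t - x i)"
  shows "ereal (a + (\<Sum>i\<in>{1..n}. l i)) \<le> Ffun n J K x t"
proof -
  have "(\<Sum>i\<in>{1..n}. ereal (l i)) \<le> (\<Sum>i\<in>{1..n}. K i (t - x i))"
    using assms(2) by (intro sum_mono) auto
  then have "ereal (\<Sum>i\<in>{1..n}. l i) \<le> (\<Sum>i\<in>{1..n}. K i (t - x i))"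
    by simp
  with assms(1) show ?thesis unfolding Ffun_def by (metis add_mono plus_ereal.simps(1))
qed

lemma exists_finite_point_in_Iint:
  assumes K: "\<forall>i\<in>{1..n}. singular_kernel (K i)" and J: "n_field_function n J"
    and y: "y \<in> Sbar n" and j: "j \<le> n" and m: "mval n J K y j \<noteq> -\<infinity>"
  shows "\<exists>t0\<in>Iint n y j. J t0 \<noteq> -\<infinity> \<and> (\<forall>i\<in>{1..n}. K i (t0 - y i) \<noteq> -\<infinity> \<and> t0 \<noteq> y i)"
proof -
  have "\<exists>t\<in>Iint n y j. Ffun n J K y t \<noteq> -\<infinity>"
  proof (rule ccontr)
    assume "\<not> ?thesis"
    then have "mval n J K y j \<le> -\<infinity>" unfolding mval_def by (intro SUP_least) auto
    with m show False by simp
  qed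
  then obtain t0 where t0: "t0 \<in> Iint n y j" and F: "Ffun n J K y t0 \<noteq> -\<infinity>" ..
  have t0_unit: "t0 \<in> {0..1}" using Iint_subset_unit[OF y j] t0 by blast
  obtain B where B: "0 \<le> B" "\<forall>i\<in>{1..n}. \<forall>s\<in>{-1..1}. K i s \<le> ereal B"
    using kernels_bounded_above[of "{1..n}" K] K by (auto simp: singular_kernel_def)
  then have KB: "\<forall>i\<in>{1..n}. K i (t0 - y i) \<le> ereal B"
    using Sbar_kernel_argument[OF y _ t0_unit] by blast
  obtain M where M: "J t0 \<le> ereal M"
    using J t0_unit unfolding n_field_function_def by blast
  have "J t0 \<noteq> -\<infinity>"
    using Ffun_le_J[where n = n and K = K and t = t0 and x = y and J = J, OF KB] F by auto
  moreover have "K i (t0 - y i) \<noteq> -\<infinity>" if "i \<in> {1..n}" for i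
    using Ffun_le_kernel_term[where n = n and K = K and t = t0 and x = y and J = J, OF KB B(1) that M] F by auto
  moreover have "K i 0 = -\<infinity>" if "i \<in> {1..n}" for i
    using K that by (simp add: singular_kernel_def)
  ultimately show ?thesis using t0 by (metis diff_self)
qed

lemma Ffun_lower_bound_near:
  assumes K: "\<forall>i\<in>{1..n}. kernel_function (K i)" and y: "y \<in> Sbar n" and t: "t \<in> {0..1}"
    and "J t \<noteq> -\<infinity>" "\<forall>i\<in>{1..n}. K i (t - y i) \<noteq> -\<infinity>"
  shows "\<exists>L d. d > 0 \<and> (\<forall>x\<in>Sbar n. (\<forall>i\<in>{1..n}. \<bar>x i - y i\<bar> < d) \<longrightarrow> ereal L \<le> Ffun n J K x t)"
proof -
  obtain a where a: "ereal a \<le> J t"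
    using ereal_dense2[of "-\<infinity>" "J t"] assms(4) by (auto simp: less_le)
  have "\<forall>i\<in>{1..n}. \<exists>l. ereal l < K i (t - y i)"
    using ereal_dense2[of "-\<infinity>"] assms(5) by (auto simp: less_le)
  then obtain l where l: "\<forall>i\<in>{1..n}. ereal (l i) < K i (t - y i)"
    by (metis bchoice)
  have "\<forall>i\<in>{1..n}. eventually (\<lambda>u. u \<in> {-1..1} \<longrightarrow> K i u \<in> {ereal (l i)<..}) (nhds (t - y i))"
    using K l Sbar_kernel_argument[OF y _ t]
    by (intro ballI continuous_on_eventually_nhds kernel_function_continuous_on) auto
  from finite_common_radius[OF finite_atLeastAtMost this]
  obtain d where d: "d > 0"
    "\<forall>i\<in>{1..n}. \<forall>u. dist u (t - y i) < d \<longrightarrow> u \<in> {-1..1} \<longrightarrow> K i u \<in> {ereal (l i)<..}"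
    by blast
  have "ereal (a + (\<Sum>i\<in>{1..n}. l i)) \<le> Ffun n J K x t"
    if x: "x \<in> Sbar n" "\<forall>i\<in>{1..n}. \<bar>x i - y i\<bar> < d" for x
  proof (rule Ffun_ge[where J = J and t = t, OF a], intro ballI less_imp_le)
    fix i assume i: "i \<in> {1..n}"
    have "dist (t - x i) (t - y i) < d" using x(2) i by (simp add: dist_real_def abs_minus_commute)
    then show "ereal (l i) < K i (t - x i)"
      using d(2) i Sbar_kernel_argument[OF x(1) i t] by blast
  qed
  with d(1) show ?thesis by blast
qed

lemma Ffun_small_near_poles:
  assumes K: "\<forall>i\<in>{1..n}. singular_kernel (K i)" and M: "\<forall>t\<in>{0..1}. J t \<le> ereal M"
  shows "\<exists>\<eta>>0. \<forall>x\<in>Sbar n. \<forall>t\<in>{0..1}. \<forall>k\<in>{1..n}. \<bar>t - x k\<bar> < \<eta> \<longrightarrow> Ffun n J K x t < ereal L"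
proof -
  obtain B where B: "0 \<le> B" "\<forall>i\<in>{1..n}. \<forall>s\<in>{-1..1}. K i s \<le> ereal B"
    using kernels_bounded_above[of "{1..n}" K] K by (auto simp: singular_kernel_def)
  define L' where "L' = L - (M + real n * B)"
  have "\<forall>k\<in>{1..n}. eventually (\<lambda>u. u \<in> {-1..1} \<longrightarrow> K k u \<in> {..<ereal L'}) (nhds 0)"
    using K by (intro ballI continuous_on_eventually_nhds kernel_function_continuous_on)
      (auto simp: singular_kernel_def)
  from finite_common_radius[OF finite_atLeastAtMost this]
  obtain \<eta> where \<eta>: "\<eta> > 0"
    "\<forall>k\<in>{1..n}. \<forall>u. dist u 0 < \<eta> \<longrightarrow> u \<in> {-1..1} \<longrightarrow> K k u \<in> {..<ereal L'}"
    by blast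
  have "Ffun n J K x t < ereal L"
    if x: "x \<in> Sbar n" and t: "t \<in> {0..1}" and k: "k \<in> {1..n}" and near: "\<bar>t - x k\<bar> < \<eta>"
    for x t k
  proof -
    have "Ffun n J K x t \<le> ereal (M + real n * B) + K k (t - x k)"
      using B M t Sbar_kernel_argument[OF x _ t]
      by (intro Ffun_le_kernel_term[where n = n and K = K and t = t and x = x and J = J, OF _ B(1) k])
        auto
    also have "\<dots> < ereal (M + real n * B) + ereal L'"
      using \<eta>(2) k near Sbar_kernel_argument[OF x k t] by (intro ereal_less_add) auto
    finally show ?thesis by (simp add: L'_def)
  qed
  with \<eta>(1) show ?thesis by blast
qed

lemma mval_eq_SUP_near_maximizer:
  assumes x: "x \<in> Sbar n" "j \<le> n" and W: "W \<subseteq> Iint n x j" "t0 \<in> W"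
    and outside: "\<forall>t\<in>Iint n x j - W. \<exists>k\<in>{1..n}. \<bar>t - x k\<bar> < \<eta>"
    and dominated: "\<forall>t\<in>{0..1}. \<forall>k\<in>{1..n}. \<bar>t - x k\<bar> < \<eta> \<longrightarrow> Ffun n J K x t \<le> Ffun n J K x t0"
  shows "mval n J K x j = (SUP t\<in>W. Ffun n J K x t)"
  unfolding mval_def
proof (rule SUP_eq_SUP_subset[OF W], intro ballI)
  fix t assume t: "t \<in> Iint n x j - W"
  then have "t \<in> {0..1}" using Iint_subset_unit[OF x] by blast
  with t outside dominated show "Ffun n J K x t \<le> Ffun n J K x t0" by blast
qed

lemma regular_point_dominates_near_poles:
  assumes K: "\<forall>i\<in>{1..n}. singular_kernel (K i)" and J: "n_field_function n J"
    and y: "y \<in> Sbar n" and j: "j \<le> n" and "mval n J K y j \<noteq> -\<infinity>"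
  shows "\<exists>t0\<in>Iint n y j. (\<forall>i\<in>{1..n}. t0 \<noteq> y i) \<and> (\<exists>r>0. \<forall>x\<in>Sbar n.
           (\<forall>i\<in>{1..n}. \<bar>x i - y i\<bar> < r) \<longrightarrow>
           (\<forall>t\<in>{0..1}. \<forall>k\<in>{1..n}. \<bar>t - x k\<bar> < r \<longrightarrow> Ffun n J K x t \<le> Ffun n J K x t0))"
proof -
  have kernels: "\<forall>i\<in>{1..n}. kernel_function (K i)"
    using K by (simp add: singular_kernel_def)
  obtain M where M: "\<forall>t\<in>{0..1}. J t \<le> ereal M"
    using J unfolding n_field_function_def by blast
  obtain t0 where t0: "t0 \<in> Iint n y j" "J t0 \<noteq> -\<infinity>"
    and t0_regular: "\<forall>i\<in>{1..n}. K i (t0 - y i) \<noteq> -\<infinity> \<and> t0 \<noteq> y i"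
    using exists_finite_point_in_Iint[OF assms] by blast
  have "t0 \<in> {0..1}" using Iint_subset_unit[OF y j] t0(1) by blast
  then obtain L d where d: "d > 0"
    and lower: "\<forall>x\<in>Sbar n. (\<forall>i\<in>{1..n}. \<bar>x i - y i\<bar> < d) \<longrightarrow> ereal L \<le> Ffun n J K x t0"
    using Ffun_lower_bound_near[where J = J, OF kernels y _ t0(2)] t0_regular by blast
  obtain \<eta> where \<eta>: "\<eta> > 0"
    and small: "\<forall>x\<in>Sbar n. \<forall>t\<in>{0..1}. \<forall>k\<in>{1..n}. \<bar>t - x k\<bar> < \<eta> \<longrightarrow> Ffun n J K x t < ereal L"
    using Ffun_small_near_poles[OF K M] by blast
  have "\<forall>x\<in>Sbar n. (\<forall>i\<in>{1..n}. \<bar>x i - y i\<bar> < min d \<eta>) \<longrightarrow>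
          (\<forall>t\<in>{0..1}. \<forall>k\<in>{1..n}. \<bar>t - x k\<bar> < min d \<eta> \<longrightarrow> Ffun n J K x t \<le> Ffun n J K x t0)"
  proof (intro ballI impI)
    fix x t k assume x: "x \<in> Sbar n" "\<forall>i\<in>{1..n}. \<bar>x i - y i\<bar> < min d \<eta>"
      and t: "t \<in> {0..1}" "k \<in> {1..n}" "\<bar>t - x k\<bar> < min d \<eta>"
    have "Ffun n J K x t < ereal L" using small[rule_format, OF x(1) t(1,2)] t(3) by simp
    also have "ereal L \<le> Ffun n J K x t0" using lower x by auto
    finally show "Ffun n J K x t \<le> Ffun n J K x t0" by simp
  qed
  with t0(1) t0_regular d \<eta> show ?thesis by (intro bexI[of _ t0] conjI exI[of _ "min d \<eta>"]) auto
qed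

lemma window_around_regular_point:
  assumes y: "y \<in> Sbar n" and j: "j \<le> n" and t0: "t0 \<in> Iint n y j" "\<forall>i\<in>{1..n}. t0 \<noteq> y i"
    and r: "0 < r"
  shows "\<exists>\<delta>>0. \<delta> < r \<and> (\<exists>a b. t0 \<in> {a..b} \<and> {a..b} \<subseteq> {0..1} \<and>
           (\<forall>x\<in>Sbar n. (\<forall>i\<in>{1..n}. \<bar>x i - y i\<bar> \<le> \<delta>) \<longrightarrow>
              {a..b} \<subseteq> Iint n x j \<and>
              (\<forall>t\<in>{a..b}. \<forall>i\<in>{1..n}. \<delta> \<le> \<bar>t - x i\<bar>) \<and>
              (\<forall>t\<in>Iint n x j - {a..b}. \<exists>i\<in>{1..n}. \<bar>t - x i\<bar> < r)))"
proof -
  obtain \<epsilon> where \<epsilon>: "0 < \<epsilon>" "\<epsilon> \<le> r/2" "\<forall>i\<in>{1..n}. \<epsilon> \<le> \<bar>t0 - y i\<bar>"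
    using exists_radius_below_distances[of "{1..n}" t0 y "r/2"] t0(2) r by auto
  define a b where "a = window_lo y j \<epsilon>" and "b = window_hi n y j \<epsilon>"
  have "{a..b} \<subseteq> Iint n y j"
    unfolding a_def b_def using \<epsilon>(1) by (intro window_subset_Iint[OF j]) simp
  then have "{a..b} \<subseteq> {0..1}" using Iint_subset_unit[OF y j] by blast
  moreover have "t0 \<in> {a..b}"
    using mem_window[OF t0(1) j \<epsilon>(3)] by (simp add: a_def b_def)
  moreover have "{a..b} \<subseteq> Iint n x j \<and> (\<forall>t\<in>{a..b}. \<forall>i\<in>{1..n}. \<epsilon>/2 \<le> \<bar>t - x i\<bar>) \<and>
      (\<forall>t\<in>Iint n x j - {a..b}. \<exists>i\<in>{1..n}. \<bar>t - x i\<bar> < r)"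
    if x: "x \<in> Sbar n" and close: "\<forall>i\<in>{1..n}. \<bar>x i - y i\<bar> \<le> \<epsilon>/2" for x
  proof (intro conjI ballI)
    have "\<forall>i\<in>{1..n}. \<bar>x i - y i\<bar> \<le> \<epsilon>" using close \<epsilon>(1) by fastforce
    then show "{a..b} \<subseteq> Iint n x j"
      unfolding a_def b_def by (rule window_subset_Iint[OF j])
    show "\<epsilon>/2 \<le> \<bar>t - x i\<bar>" if "t \<in> {a..b}" "i \<in> {1..n}" for t i
      using window_far_from_poles[OF x j close that(1)[unfolded a_def b_def] that(2)] by simp
    show "\<exists>i\<in>{1..n}. \<bar>t - x i\<bar> < r" if "t \<in> Iint n x j - {a..b}" for t
    proof -
      have "t \<in> Iint n x j - {window_lo y j \<epsilon> .. window_hi n y j \<epsilon>}"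
        using that by (simp add: a_def b_def)
      from bspec[OF Iint_diff_window_near_pole[OF j close] this]
      obtain i where i: "i \<in> {1..n}" "\<bar>t - x i\<bar> < \<epsilon> + \<epsilon>/2" ..
      have "\<bar>t - x i\<bar> < r" using i(2) \<epsilon>(2) by linarith
      with i(1) show ?thesis ..
    qed
  qed
  ultimately have "\<exists>a b. t0 \<in> {a..b} \<and> {a..b} \<subseteq> {0..1} \<and>
      (\<forall>x\<in>Sbar n. (\<forall>i\<in>{1..n}. \<bar>x i - y i\<bar> \<le> \<epsilon>/2) \<longrightarrow>
         {a..b} \<subseteq> Iint n x j \<and> (\<forall>t\<in>{a..b}. \<forall>i\<in>{1..n}. \<epsilon>/2 \<le> \<bar>t - x i\<bar>) \<and>
         (\<forall>t\<in>Iint n x j - {a..b}. \<exists>i\<in>{1..n}. \<bar>t - x i\<bar> < r))"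
    by blast
  moreover have "0 < \<epsilon>/2" "\<epsilon>/2 < r" using \<epsilon>(1,2) by linarith+
  ultimately show ?thesis by blast
qed

theorem lemma3p2:
  fixes n :: nat and K :: "nat \<Rightarrow> real \<Rightarrow> ereal" and J :: "real \<Rightarrow> ereal"
    and y :: "nat \<Rightarrow> real" and j :: nat
  assumes "\<forall>i\<in>{1..n}. singular_kernel (K i)"
    and "n_field_function n J"
    and "y \<in> Sbar n"
    and "j \<le> n"
    and "mval n J K y j \<noteq> -\<infinity>"
  shows "\<exists>\<delta>>0. \<exists>a b. a \<le> b \<and> {a..b} \<subseteq> {0..1} \<and>
           (\<forall>x\<in>Sbar n. (\<forall>i\<in>{1..n}. \<bar>x i - y i\<bar> \<le> \<delta>) \<longrightarrow>
              ({a..b} \<subseteq> Iint n x j \<and>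
               (\<forall>t\<in>{a..b}. \<forall>i\<in>{1..n}. \<bar>t - x i\<bar> \<ge> \<delta>) \<and>
               mval n J K x j = (SUP t\<in>{a..b}. Ffun n J K x t)))"
proof -
  obtain t0 r where t0: "t0 \<in> Iint n y j" "\<forall>i\<in>{1..n}. t0 \<noteq> y i" and r: "r > 0"
    and dominated: "\<forall>x\<in>Sbar n. (\<forall>i\<in>{1..n}. \<bar>x i - y i\<bar> < r) \<longrightarrow>
      (\<forall>t\<in>{0..1}. \<forall>k\<in>{1..n}. \<bar>t - x k\<bar> < r \<longrightarrow> Ffun n J K x t \<le> Ffun n J K x t0)"
    using regular_point_dominates_near_poles[OF assms] by blast
  obtain \<delta> a b where \<delta>: "\<delta> > 0" "\<delta> < r" and W: "t0 \<in> {a..b}" "{a..b} \<subseteq> {0..1}"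
    and window: "\<forall>x\<in>Sbar n. (\<forall>i\<in>{1..n}. \<bar>x i - y i\<bar> \<le> \<delta>) \<longrightarrow>
       {a..b} \<subseteq> Iint n x j \<and> (\<forall>t\<in>{a..b}. \<forall>i\<in>{1..n}. \<delta> \<le> \<bar>t - x i\<bar>) \<and>
       (\<forall>t\<in>Iint n x j - {a..b}. \<exists>i\<in>{1..n}. \<bar>t - x i\<bar> < r)"
    using window_around_regular_point[OF assms(3,4) t0 r] by blast
  have mval: "mval n J K x j = (SUP t\<in>{a..b}. Ffun n J K x t)"
    if x: "x \<in> Sbar n" and close: "\<forall>i\<in>{1..n}. \<bar>x i - y i\<bar> \<le> \<delta>" for x
  proof (rule mval_eq_SUP_near_maximizer[OF x assms(4) _ W(1)])
    show "{a..b} \<subseteq> Iint n x j" "\<forall>t\<in>Iint n x j - {a..b}. \<exists>k\<in>{1..n}. \<bar>t - x k\<bar> < r"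
      using window x close by blast+
    show "\<forall>t\<in>{0..1}. \<forall>k\<in>{1..n}. \<bar>t - x k\<bar> < r \<longrightarrow> Ffun n J K x t \<le> Ffun n J K x t0"
      using dominated x close \<delta>(2) by force
  qed
  have "\<forall>x\<in>Sbar n. (\<forall>i\<in>{1..n}. \<bar>x i - y i\<bar> \<le> \<delta>) \<longrightarrow>
      {a..b} \<subseteq> Iint n x j \<and> (\<forall>t\<in>{a..b}. \<forall>i\<in>{1..n}. \<bar>t - x i\<bar> \<ge> \<delta>) \<and>
      mval n J K x j = (SUP t\<in>{a..b}. Ffun n J K x t)"
    using window mval by simp
  moreover have "a \<le> b" using W(1) by simp
  ultimately show ?thesis using \<delta>(1) W(2) by blast
qed

end
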